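(* There exist infinitely many terms of the Smarandache square-digital subsequence which are not of the form $N \times 10^{2k}$ with $k \in \mathbb{N}$ and $N$ a perfect square.
   Context: The Smarandache square-digital subsequence consists of those perfect squares $n^2$, $n \in \mathbb{N}_0 = \{0,1,2,\dots\}$, all of whose decimal digits belong to the set $\{0,1,4,9\}$ (i.e., every decimal digit is itself a perfect square). *)

theory Defs
  imports Main
begin

(* every decimal digit of m lies in {0,1,4,9}; digit i is (m div 10^i) mod 10,
   positions beyond the length give digit 0, which is in the set anyway *)
definition square_digital :: "nat \<Rightarrow> bool" where
  "square_digital m \<longleftrightarrow> (\<forall>i::nat. (m div 10 ^ i) mod 10 \<in> {0, 1, 4, 9})"

definition sq_digital_term :: "nat \<Rightarrow> bool" where
  "sq_digital_term m \<longleftrightarrow> (\<exists>n::nat. m = n ^ 2) \<and> square_digital m"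

end

theory Submission
  imports Defs
begin

(* The squares (2 * 10^k + 1)^2 = 4 * 10^(2k) + 4 * 10^k + 1 with k \<ge> 1 have the decimal
   digits 4 0..0 4 0..0 1. They end in the digit 1, so they are not divisible by 10,
   whereas every N * 10^(2k) with k \<ge> 1 is. *)

lemma decimal_digit_concat:
  fixes a b i j :: nat
  assumes "b < 10 ^ i"
  shows "(a * 10 ^ i + b) div 10 ^ j mod 10 =
           (if j < i then b div 10 ^ j mod 10 else a div 10 ^ (j - i) mod 10)"
proof (cases "j < i")
  case True
  then obtain d where "i = Suc d + j"
    by (auto simp: less_iff_Suc_add)
  then have "a * 10 ^ i = (a * 10 ^ d * 10) * 10 ^ j"
    by (simp add: power_add mult_ac)
  then have "(a * 10 ^ i + b) div 10 ^ j = a * 10 ^ d * 10 + b div 10 ^ j"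
    by (simp only:) simp
  with True show ?thesis
    by simp
next
  case False
  then have "j = i + (j - i)"
    by simp
  then have "(a * 10 ^ i + b) div 10 ^ j = (a * 10 ^ i + b) div 10 ^ i div 10 ^ (j - i)"
    by (metis div_mult2_eq power_add)
  also have "\<dots> = a div 10 ^ (j - i)"
    using assms by simp
  finally show ?thesis
    using False by simp
qed

lemma square_digital_concat:
  assumes "square_digital a" and "square_digital b" and "b < 10 ^ i"
  shows "square_digital (a * 10 ^ i + b)"
  using assms unfolding square_digital_def by (simp add: decimal_digit_concat)

lemma square_digital_digit:
  assumes "d \<in> {0, 1, 4, 9}"
  shows "square_digital d"
  unfolding square_digital_def
proof
  fix i :: nat
  show "d div 10 ^ i mod 10 \<in> {0, 1, 4, 9}"
  proof (cases i)
    case (Suc j)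
    have "d < 10 * 10 ^ j"
      using assms by (auto intro: less_le_trans[of _ 10])
    with Suc show ?thesis by simp
  qed (use assms in auto)
qed

lemma power2_succ_mod_10:
  fixes n :: nat
  assumes "10 dvd n"
  shows "(n + 1) ^ 2 mod 10 = 1"
proof -
  from assms obtain q where "n = 10 * q" ..
  then have square: "(n + 1) ^ 2 = 1 + (10 * q * q + 2 * q) * 10"
    by (simp add: power2_eq_square algebra_simps)
  show ?thesis
    by (simp only: square mod_mult_self1) simp
qed

lemma square_digital_square_20_01:
  fixes k :: nat
  assumes "k \<ge> 1"
  shows "square_digital ((2 * 10 ^ k + 1) ^ 2)"
proof -
  have small: "(4::nat) < 10 ^ k"
    using assms power_increasing[of 1 k "10::nat"] by simp
  have "(2 * 10 ^ k + 1 :: nat) ^ 2 = (4 * 10 ^ k + 4) * 10 ^ k + 1"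
    by (simp add: power2_eq_square algebra_simps)
  moreover have "square_digital (4 * 10 ^ k + 4)"
    using small by (intro square_digital_concat square_digital_digit) auto
  then have "square_digital ((4 * 10 ^ k + 4) * 10 ^ k + 1)"
    using small by (intro square_digital_concat square_digital_digit) auto
  ultimately show ?thesis
    by (simp only:)
qed

theorem theorem1:
  shows "infinite {m::nat. sq_digital_term m \<and>
            \<not> (\<exists>N k j::nat. k \<ge> 1 \<and> N = j ^ 2 \<and> m = N * 10 ^ (2 * k))}"
proof -
  define w where "w k = (2 * 10 ^ Suc k + 1 :: nat) ^ 2" for k
  have "inj w"
    by (rule injI) (simp add: w_def power_eq_iff_eq_base)
  then have "infinite (range w)"
    using finite_imageD infinite_UNIV_nat by blast
  moreover have "range w \<subseteq> {m::nat. sq_digital_term m \<and>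
            \<not> (\<exists>N k j::nat. k \<ge> 1 \<and> N = j ^ 2 \<and> m = N * 10 ^ (2 * k))}"
  proof safe
    fix k
    show "sq_digital_term (w k)"
      unfolding sq_digital_term_def w_def using square_digital_square_20_01[of "Suc k"] by auto
    fix N k' j :: nat
    assume "k' \<ge> 1" and "w k = j ^ 2 * 10 ^ (2 * k')"
    then have "10 dvd w k"
      by (simp add: dvd_power)
    moreover have "w k mod 10 = 1"
      unfolding w_def by (rule power2_succ_mod_10) simp
    ultimately show False by simp
  qed
  ultimately show ?thesis
    using infinite_super by blast
qed

end
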